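(* Let $k\geq3$ be an integer and let $0\leq a<\frac1k$ and $\frac{k-1}{k}<b\leq 1$. Then: (a) $\mathcal{W}_k(a,b)\subseteq C_k$; (b) $g_k^{-1}\big(\mathcal{W}_2(g_k(a),g_k(b))\big)\cap B_k=\emptyset$; (c) $\mathcal{W}_k(a,b)=C_k\cap g_k^{-1}\big(\mathcal{W}_2(g_k(a),g_k(b))\big)$.
   Context: For an integer $m\geq2$, $T_m:[0,1)\to[0,1)$ is $T_m(x)=mx\bmod1$, and for $0\leq c<e\leq1$, $\mathcal{W}_m(c,e)=\{x\in[0,1)\ :\ T_m^n(x)\notin(c,e)\ \forall n\geq0\}$. $B_k=\{\ell/k^n\ :\ n\geq1,\ 1\leq\ell\leq k^n-1\}$. $C_k$ is the set of $x\in[0,1]$ admitting an expansion $x=\sum_{n\geq1}a_nk^{-n}$ with all $a_n\in\{0,k-1\}$. The function $g_k:[0,1]\to[0,1]$ is defined as follows: write $x=\sum_{n\geq1}a_nk^{-n}$ with $a_n\in\{0,1,\dots,k-1\}$; if $N\geq1$ is the least index with $a_N\notin\{0,k-1\}$, set $g_k(x)=\sum_{n=1}^{N-1}\frac{a_n}{(k-1)2^n}+\frac{1}{2^N}$; if all $a_n\in\{0,k-1\}$, set $g_k(x)=\sum_{n\geq1}\frac{a_n}{(k-1)2^n}$ (independent of the choice of expansion). Preimages $g_k^{-1}$ are taken in $[0,1]$. *)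

theory Defs
  imports Complex_Main
begin

definition T :: "nat \<Rightarrow> real \<Rightarrow> real" where
  "T m x = real m * x - of_int \<lfloor>real m * x\<rfloor>"

definition W :: "nat \<Rightarrow> real \<Rightarrow> real \<Rightarrow> real set" where
  "W m c e = {x. 0 \<le> x \<and> x < 1 \<and> (\<forall>n. ((T m) ^^ n) x \<notin> {c<..<e})}"

definition B :: "nat \<Rightarrow> real set" where
  "B k = {real l / real k ^ n | l n. n \<ge> 1 \<and> 1 \<le> l \<and> l \<le> k ^ n - 1}"

text \<open>A k-adic expansion: digits d n for n \<ge> 1 (d 0 is ignored).\<close>
definition is_expansion :: "nat \<Rightarrow> (nat \<Rightarrow> nat) \<Rightarrow> real \<Rightarrow> bool" where
  "is_expansion k d x \<longleftrightarrow> (\<forall>n\<ge>1. d n < k) \<and>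
     x = (\<Sum>n. real (d (Suc n)) / real k ^ Suc n)"

definition C :: "nat \<Rightarrow> real set" where
  "C k = {x. 0 \<le> x \<and> x \<le> 1 \<and>
     (\<exists>d. (\<forall>n\<ge>1. d n \<in> {0, k - 1}) \<and> x = (\<Sum>n. real (d (Suc n)) / real k ^ Suc n))}"

definition gval :: "nat \<Rightarrow> (nat \<Rightarrow> nat) \<Rightarrow> real" where
  "gval k d =
    (if \<exists>N\<ge>1. d N \<notin> {0, k - 1} then
       (let N = (LEAST N. N \<ge> 1 \<and> d N \<notin> {0, k - 1}) in
         (\<Sum>n\<in>{1..<N}. real (d n) / (real (k - 1) * 2 ^ n)) + 1 / 2 ^ N)
     else (\<Sum>n. real (d (Suc n)) / (real (k - 1) * 2 ^ Suc n)))"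

text \<open>g_k(x), using any k-adic expansion of x (the value is independent of the choice).\<close>
definition g :: "nat \<Rightarrow> real \<Rightarrow> real" where
  "g k x = gval k (SOME d. is_expansion k d x)"

definition g_preimage :: "nat \<Rightarrow> real set \<Rightarrow> real set" where
  "g_preimage k S = {x. 0 \<le> x \<and> x \<le> 1 \<and> g k x \<in> S}"

end

theory Submission
  imports Defs
begin

text \<open>
  The map \<open>g\<^sub>k\<close> reads the \<open>k\<close>-adic digits \<open>0\<close> and \<open>k - 1\<close> as binary digits and is constant
  \<open>1/2\<close> on \<open>[1/k, (k-1)/k]\<close>. From the digit formula it is well defined, monotone, and satisfies
  \<open>g\<^sub>k x = g\<^sub>k (k x) / 2\<close> on \<open>[0, 1/k]\<close> and \<open>g\<^sub>k x = 1/2 + g\<^sub>k (k x - (k - 1)) / 2\<close> on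
  \<open>[(k-1)/k, 1]\<close>; hence it conjugates \<open>T\<^sub>k\<close> to the doubling map on the two outer intervals
  \<open>[0, 1/k)\<close> and \<open>((k-1)/k, 1)\<close>. Because \<open>a < 1/k\<close> and \<open>b > (k-1)/k\<close>, an orbit avoiding
  \<open>(a, b)\<close> stays in the outer intervals, so all its digits are extreme and its image under \<open>g\<^sub>k\<close>
  is a doubling orbit avoiding \<open>(g\<^sub>k a, g\<^sub>k b)\<close>, an interval containing \<open>1/2\<close>. Conversely a
  doubling orbit avoiding that interval never meets \<open>1/2\<close>, which keeps the \<open>T\<^sub>k\<close>-orbit of any
  preimage in the outer intervals. Along such an orbit \<open>g\<^sub>k\<close> separates points, since a segment
  on which \<open>g\<^sub>k\<close> is constant would be stretched by the factor \<open>k\<close> forever; and the orbit stays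
  positive, whereas every \<open>k\<close>-adic rational is eventually mapped to \<open>0\<close>.
\<close>

section \<open>\<open>k\<close>-adic expansions\<close>

definition digits_cons :: "nat \<Rightarrow> (nat \<Rightarrow> nat) \<Rightarrow> nat \<Rightarrow> nat" where
  "digits_cons j e = (\<lambda>n. if n = 1 then j else e (n - 1))"

definition digits_tl :: "(nat \<Rightarrow> nat) \<Rightarrow> nat \<Rightarrow> nat" where
  "digits_tl d = (\<lambda>n. if n = 0 then d 0 else d (Suc n))"

lemma digits_cons_tl: "digits_cons (d 1) (digits_tl d) = d"
proof
  fix n show "digits_cons (d 1) (digits_tl d) n = d n"
    by (cases n) (auto simp: digits_cons_def digits_tl_def)
qed

lemma digits_cons_1 [simp]: "digits_cons j e (Suc 0) = j"
  and digits_cons_Suc_Suc [simp]: "digits_cons j e (Suc (Suc n)) = e (Suc n)"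
  by (simp_all add: digits_cons_def)

lemma expansion_summable:
  assumes "k \<ge> 2" "\<forall>n\<ge>1. d n < k"
  shows "summable (\<lambda>n. real (d (Suc n)) / real k ^ Suc n)"
proof (rule summable_comparison_test')
  show "summable (\<lambda>n. (1 / real k) ^ n)"
    using assms by (intro summable_geometric) auto
  fix n
  have "real (d (Suc n)) / real k ^ Suc n \<le> real k / real k ^ Suc n"
    using assms by (intro divide_right_mono) (auto simp: less_imp_le)
  also have "\<dots> = (1 / real k) ^ n"
    using assms by (simp add: power_divide)
  finally show "norm (real (d (Suc n)) / real k ^ Suc n) \<le> (1 / real k) ^ n"
    by simp
qed

lemma expansion_sums:
  "k \<ge> 2 \<Longrightarrow> is_expansion k d x \<Longrightarrow> (\<lambda>n. real (d (Suc n)) / real k ^ Suc n) sums x"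
  using expansion_summable unfolding is_expansion_def by (auto simp: summable_sums)

lemma is_expansion_digits_cons:
  assumes k: "k \<ge> 2" and e: "is_expansion k e y" and j: "j < k"
  shows "is_expansion k (digits_cons j e) ((real j + y) / real k)"
proof -
  have "(\<lambda>n. (1 / real k) * (real (e (Suc n)) / real k ^ Suc n)) sums ((1 / real k) * y)"
    using expansion_sums[OF k e] by (rule sums_mult)
  then have "(\<lambda>n. real (digits_cons j e (Suc (Suc n))) / real k ^ Suc (Suc n)) sums (y / real k)"
    by simp
  then have "(\<lambda>n. real (digits_cons j e (Suc n)) / real k ^ Suc n) sums (y / real k + real j / real k)"
    using sums_Suc_iff[where f = "\<lambda>n. real (digits_cons j e (Suc n)) / real k ^ Suc n"] by simp
  moreover have "\<forall>n\<ge>1. digits_cons j e n < k"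
    using e j unfolding is_expansion_def digits_cons_def by auto
  ultimately show ?thesis
    unfolding is_expansion_def by (auto simp: sums_iff add_divide_distrib)
qed

lemma is_expansion_digits_tl:
  assumes k: "k \<ge> 2" and d: "is_expansion k d x"
  obtains y where "d 1 < k" "is_expansion k (digits_tl d) y" "x = (real (d 1) + y) / real k"
proof
  define y where "y = (\<Sum>n. real (digits_tl d (Suc n)) / real k ^ Suc n)"
  show d1: "d 1 < k" and tl: "is_expansion k (digits_tl d) y"
    using d unfolding is_expansion_def y_def digits_tl_def by auto
  have "is_expansion k d ((real (d 1) + y) / real k)"
    using is_expansion_digits_cons[OF k tl d1] unfolding digits_cons_tl .
  then show "x = (real (d 1) + y) / real k"
    using d unfolding is_expansion_def by simp
qed

lemma sums_top_digits:
  assumes "k \<ge> 2"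
  shows "(\<lambda>n. (real k - 1) / real k ^ Suc n) sums 1"
proof -
  have "(\<lambda>n. (real k - 1) / real k * (1 / real k) ^ n) sums ((real k - 1) / real k * (1 / (1 - 1 / real k)))"
    using assms by (intro sums_mult geometric_sums) auto
  moreover have "(real k - 1) / real k * (1 / (1 - 1 / real k)) = 1"
    using assms by (simp add: field_simps)
  ultimately show ?thesis
    using assms by (simp add: power_divide del: of_nat_Suc)
qed

lemma is_expansion_bounds:
  assumes k: "k \<ge> 2" and d: "is_expansion k d x"
  shows "0 \<le> x" "x \<le> 1"
proof -
  have "real (d (Suc n)) / real k ^ Suc n \<le> (real k - 1) / real k ^ Suc n" for n
  proof -
    have "d (Suc n) < k"
      using d unfolding is_expansion_def by simp
    then have "real (d (Suc n)) \<le> real k - 1"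
      by linarith
    then show ?thesis
      by (simp add: divide_right_mono)
  qed
  then show "x \<le> 1"
    using sums_le[OF _ expansion_sums[OF k d] sums_top_digits[OF k]] by blast
  show "0 \<le> x"
    using sums_le[of "\<lambda>_. 0", OF _ sums_zero expansion_sums[OF k d]] by simp
qed

lemma is_expansion_zero: "0 < k \<Longrightarrow> is_expansion k (\<lambda>_. 0) 0"
  unfolding is_expansion_def by simp

lemma is_expansion_one:
  assumes "k \<ge> 2"
  shows "is_expansion k (\<lambda>_. k - 1) 1"
  using sums_top_digits[OF assms] assms unfolding is_expansion_def
  by (auto simp: sums_iff of_nat_diff)

section \<open>The map \<open>T\<^sub>k\<close> and the greedy expansion\<close>

lemma T_bounds: "0 \<le> T m y" "T m y < 1"
  unfolding T_def by linarith+

lemma funpow_T_bounds: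
  assumes "0 \<le> x" "x < 1"
  shows "0 \<le> (T m ^^ n) x" "(T m ^^ n) x < 1"
  using assms T_bounds by (cases n; simp)+

lemma T_eq:
  "real j \<le> real m * y \<Longrightarrow> real m * y < real j + 1 \<Longrightarrow> T m y = real m * y - real j"
  unfolding T_def by (subst floor_unique[of "int j"]) auto

lemma T_low:
  assumes "0 \<le> y" "y < 1 / real k"
  shows "T k y = real k * y"
proof -
  have "real k * y < 1"
    using assms by (cases "k = 0") (simp_all add: field_simps)
  then show ?thesis
    using T_eq[of 0 k y] assms by simp
qed

lemma T_high:
  assumes "k \<ge> 1" "(real k - 1) / real k < y" "y < 1"
  shows "T k y = real k * y - (real k - 1)"
proof -
  have "real (k - 1) \<le> real k * y" "real k * y < real (k - 1) + 1"
    using assms by (simp_all add: of_nat_diff field_simps)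
  then show ?thesis
    using T_eq[of "k - 1" k y] assms by (simp add: of_nat_diff)
qed

lemma funpow_T_eq_int: "\<exists>z::int. (T k ^^ n) x = real k ^ n * x - of_int z"
proof (induction n)
  case 0
  show ?case
    by (intro exI[of _ 0]) simp
next
  case (Suc n)
  then obtain z where z: "(T k ^^ n) x = real k ^ n * x - of_int z"
    by blast
  define f where "f = \<lfloor>real k * (T k ^^ n) x\<rfloor>"
  have "(T k ^^ Suc n) x = real k * (real k ^ n * x - of_int z) - of_int f"
    unfolding f_def z[symmetric] by (simp add: T_def)
  also have "\<dots> = real k ^ Suc n * x - of_int (int k * z + f)"
    by (simp add: algebra_simps)
  finally show ?case
    by blast
qed

lemma funpow_T_k_adic:
  assumes "k > 0" "n \<ge> 1"
  shows "(T k ^^ n) (real l / real k ^ n) = 0"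
proof -
  obtain z :: int where "(T k ^^ n) (real l / real k ^ n) = real k ^ n * (real l / real k ^ n) - of_int z"
    using funpow_T_eq_int by blast
  also have "\<dots> = of_int (int l - z)"
    using assms(1) by simp
  finally have eq: "(T k ^^ n) (real l / real k ^ n) = of_int (int l - z)" .
  obtain n' where "n = Suc n'"
    using assms(2) by (cases n) auto
  then have "0 \<le> (T k ^^ n) (real l / real k ^ n)" "(T k ^^ n) (real l / real k ^ n) < 1"
    using T_bounds by simp_all
  then have "0 \<le> int l - z" "int l - z < 1"
    unfolding eq by simp_all
  then show ?thesis
    unfolding eq by simp
qed

definition orbit_digits :: "nat \<Rightarrow> real \<Rightarrow> nat \<Rightarrow> nat" where
  "orbit_digits k x n = nat \<lfloor>real k * (T k ^^ (n - 1)) x\<rfloor>"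

lemma orbit_digits_Suc:
  assumes "0 \<le> x" "x < 1"
  shows "real (orbit_digits k x (Suc n)) = of_int \<lfloor>real k * (T k ^^ n) x\<rfloor>"
  using funpow_T_bounds[OF assms, where m = k and n = n] unfolding orbit_digits_def by simp

lemma orbit_digits_less:
  assumes "k > 0" "0 \<le> x" "x < 1"
  shows "orbit_digits k x (Suc n) < k"
proof -
  have "real k * (T k ^^ n) x < real k"
    using funpow_T_bounds[OF assms(2,3), where m = k and n = n] assms(1) by simp
  then have "real (orbit_digits k x (Suc n)) < real k"
    unfolding orbit_digits_Suc[OF assms(2,3)] by linarith
  then show ?thesis
    by simp
qed

lemma orbit_digits_partial_sums:
  assumes k: "k \<ge> 1" and x: "0 \<le> x" "x < 1"
  shows "x = (\<Sum>n<N. real (orbit_digits k x (Suc n)) / real k ^ Suc n) + (T k ^^ N) x / real k ^ N"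
proof (induction N)
  case 0
  show ?case
    by simp
next
  case (Suc N)
  have "(T k ^^ Suc N) x = real k * (T k ^^ N) x - real (orbit_digits k x (Suc N))"
    unfolding orbit_digits_Suc[OF x] by (simp add: T_def)
  then have "(T k ^^ N) x / real k ^ N
      = real (orbit_digits k x (Suc N)) / real k ^ Suc N + (T k ^^ Suc N) x / real k ^ Suc N"
    using k by (simp add: field_simps)
  with Suc show ?case
    by simp
qed

lemma is_expansion_orbit_digits:
  assumes k: "k \<ge> 2" and x: "0 \<le> x" "x < 1"
  shows "is_expansion k (orbit_digits k x) x"
proof -
  have "(\<lambda>N. (T k ^^ N) x / real k ^ N) \<longlonglongrightarrow> 0"
  proof (rule tendsto_sandwich[of "\<lambda>_. 0" _ _ "\<lambda>N. (1 / real k) ^ N"])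
    show "\<forall>\<^sub>F N in sequentially. 0 \<le> (T k ^^ N) x / real k ^ N"
      using funpow_T_bounds[OF x] by simp
    show "\<forall>\<^sub>F N in sequentially. (T k ^^ N) x / real k ^ N \<le> (1 / real k) ^ N"
      using funpow_T_bounds[OF x] k
      by (intro always_eventually allI) (simp add: power_divide divide_right_mono less_imp_le)
    show "(\<lambda>N. (1 / real k) ^ N) \<longlonglongrightarrow> 0"
      using k by (intro LIMSEQ_power_zero) auto
  qed simp
  then have "(\<lambda>N. x - (T k ^^ N) x / real k ^ N) \<longlonglongrightarrow> x"
    using tendsto_diff[OF tendsto_const] by fastforce
  moreover have "(\<lambda>N. x - (T k ^^ N) x / real k ^ N)
      = (\<lambda>N. \<Sum>n<N. real (orbit_digits k x (Suc n)) / real k ^ Suc n)"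
    using orbit_digits_partial_sums[OF _ x] k by (simp add: fun_eq_iff algebra_simps)
  ultimately have "(\<lambda>n. real (orbit_digits k x (Suc n)) / real k ^ Suc n) sums x"
    unfolding sums_def by simp
  then show ?thesis
    unfolding is_expansion_def using orbit_digits_less[OF _ x] k
    by (auto simp: sums_iff dest!: Suc_le_D)
qed

lemma expansion_exists:
  assumes "k \<ge> 2" "0 \<le> x" "x \<le> 1"
  obtains d where "is_expansion k d x"
  using is_expansion_one[OF assms(1)] is_expansion_orbit_digits[OF assms(1,2)] assms(3)
  by (cases "x = 1") force+

section \<open>The digit formula for \<open>g\<^sub>k\<close> and its independence of the expansion\<close>

lemma extreme_digit_weight_le:
  assumes "k \<ge> 2" "d n \<in> {0, k - 1}"
  shows "real (d n) / (real (k - 1) * 2 ^ n) \<le> (1 / 2) ^ n"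
proof -
  have "real (d n) / (real (k - 1) * 2 ^ n) \<le> real (k - 1) / (real (k - 1) * 2 ^ n)"
    using assms(2) by (intro divide_right_mono) auto
  also have "\<dots> = (1 / 2) ^ n"
    using assms(1) by (simp add: power_one_over)
  finally show ?thesis .
qed

lemma extreme_digit_series:
  assumes k: "k \<ge> 2" and d: "\<forall>n\<ge>1. d n \<in> {0, k - 1}"
  defines "c \<equiv> \<lambda>n. real (d (Suc n)) / (real (k - 1) * 2 ^ Suc n)"
  shows "summable c" "0 \<le> suminf c" "suminf c \<le> 1"
proof -
  have c_le: "c n \<le> (1 / 2) ^ Suc n" for n
    unfolding c_def using d by (intro extreme_digit_weight_le k) auto
  show "summable c"
  proof (rule summable_comparison_test')
    show "norm (c n) \<le> (1 / 2) ^ Suc n" for n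
      using c_le[of n] by (simp add: c_def)
  qed simp
  then show "suminf c \<le> 1"
    using sums_le[OF c_le summable_sums power_half_series] by blast
  show "0 \<le> suminf c"
    using \<open>summable c\<close> unfolding c_def by (intro suminf_nonneg) simp_all
qed

lemma gval_cons_middle:
  assumes "j \<notin> {0, k - 1}"
  shows "gval k (digits_cons j e) = 1 / 2"
proof -
  have "(LEAST N. N \<ge> 1 \<and> digits_cons j e N \<notin> {0, k - 1}) = 1"
    using assms by (intro Least_equality) auto
  moreover have "\<exists>N\<ge>1. digits_cons j e N \<notin> {0, k - 1}"
    using assms by (intro exI[of _ 1]) auto
  ultimately show ?thesis
    unfolding gval_def by simp
qed

lemma digits_cons_Suc_notin:
  assumes "j \<in> S"
  shows "(Suc m \<ge> 1 \<and> digits_cons j e (Suc m) \<notin> S) \<longleftrightarrow> (m \<ge> 1 \<and> e m \<notin> S)"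
  using assms by (cases m) auto

lemma ex_digits_cons_notin:
  assumes "j \<in> S"
  shows "(\<exists>N\<ge>1. digits_cons j e N \<notin> S) \<longleftrightarrow> (\<exists>N\<ge>1. e N \<notin> S)"
  using digits_cons_Suc_notin[OF assms] by (metis Suc_le_D Suc_le_mono One_nat_def le_add1 plus_1_eq_Suc)

lemma Least_digits_cons_notin:
  assumes "j \<in> S" "\<exists>N\<ge>1. e N \<notin> S"
  shows "(LEAST N. N \<ge> 1 \<and> digits_cons j e N \<notin> S) = Suc (LEAST N. N \<ge> 1 \<and> e N \<notin> S)"
proof -
  obtain N where "N \<ge> 1" "digits_cons j e N \<notin> S"
    using assms ex_digits_cons_notin by blast
  then have "(LEAST N. N \<ge> 1 \<and> digits_cons j e N \<notin> S)
      = Suc (LEAST m. Suc m \<ge> 1 \<and> digits_cons j e (Suc m) \<notin> S)"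
    by (intro Least_Suc) auto
  then show ?thesis
    unfolding digits_cons_Suc_notin[OF assms(1)] .
qed

lemma sum_digits_cons_weights:
  assumes "M \<ge> 1"
  shows "(\<Sum>n\<in>{1..<Suc M}. real (digits_cons j e n) / (real (k - 1) * 2 ^ n))
    = real j / (real (k - 1) * 2) + (\<Sum>n\<in>{1..<M}. real (e n) / (real (k - 1) * 2 ^ n)) / 2"
proof -
  have "(\<Sum>n\<in>{1..<Suc M}. real (digits_cons j e n) / (real (k - 1) * 2 ^ n))
      = real j / (real (k - 1) * 2) + (\<Sum>n\<in>{Suc 1..<Suc M}. real (digits_cons j e n) / (real (k - 1) * 2 ^ n))"
    using assms by (subst sum.atLeast_Suc_lessThan) auto
  also have "(\<Sum>n\<in>{Suc 1..<Suc M}. real (digits_cons j e n) / (real (k - 1) * 2 ^ n))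
      = (\<Sum>n\<in>{1..<M}. real (e n) / (real (k - 1) * 2 ^ n)) / 2"
    unfolding sum.shift_bounds_Suc_ivl sum_divide_distrib
    by (intro sum.cong) (auto simp: digits_cons_def)
  finally show ?thesis .
qed

lemma gval_cons_extreme:
  assumes k: "k \<ge> 2" and j: "j \<in> {0, k - 1}"
  shows "gval k (digits_cons j e) = (real j / real (k - 1) + gval k e) / 2"
proof (cases "\<exists>N\<ge>1. e N \<notin> {0, k - 1}")
  case True
  define M where "M = (LEAST N. N \<ge> 1 \<and> e N \<notin> {0, k - 1})"
  have "M \<ge> 1"
    unfolding M_def using True by (metis (mono_tags, lifting) LeastI)
  define X where "X = (\<Sum>n\<in>{1..<M}. real (e n) / (real (k - 1) * 2 ^ n))"
  have "gval k (digits_cons j e) = real j / (real (k - 1) * 2) + X / 2 + 1 / 2 ^ Suc M"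
    using True sum_digits_cons_weights[OF \<open>M \<ge> 1\<close>, of j e k] unfolding gval_def M_def X_def Let_def
      ex_digits_cons_notin[OF j] Least_digits_cons_notin[OF j True] by simp
  moreover have "gval k e = X + 1 / 2 ^ M"
    using True unfolding gval_def M_def X_def Let_def by simp
  ultimately show ?thesis
    by (simp add: add_divide_distrib)
next
  case False
  define c where "c n = real (e (Suc n)) / (real (k - 1) * 2 ^ Suc n)" for n
  have "summable c"
    unfolding c_def using extreme_digit_series(1)[OF k] False by auto
  then have "(\<lambda>n. c n / 2) sums (suminf c / 2)"
    by (intro sums_divide summable_sums)
  then have "(\<lambda>n. real (digits_cons j e (Suc (Suc n))) / (real (k - 1) * 2 ^ Suc (Suc n)))
      sums (suminf c / 2)"
    by (simp add: c_def mult_ac)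
  then have "(\<lambda>n. real (digits_cons j e (Suc n)) / (real (k - 1) * 2 ^ Suc n))
      sums (suminf c / 2 + real j / (real (k - 1) * 2))"
    using sums_Suc_iff[where f = "\<lambda>n. real (digits_cons j e (Suc n)) / (real (k - 1) * 2 ^ Suc n)"]
    by simp
  moreover have "\<not> (\<exists>N\<ge>1. digits_cons j e N \<notin> {0, k - 1})"
    using False ex_digits_cons_notin[OF j] by blast
  ultimately have "gval k (digits_cons j e) = suminf c / 2 + real j / (real (k - 1) * 2)"
    unfolding gval_def by (simp only: if_False sums_iff)
  moreover have "gval k e = suminf c"
    unfolding gval_def c_def if_not_P[OF False] ..
  ultimately show ?thesis
    by (simp add: add_divide_distrib)
qed

lemma gval_first_digit:
  assumes "k \<ge> 2"
  shows "gval k d = (if d 1 \<in> {0, k - 1}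
    then (real (d 1) / real (k - 1) + gval k (digits_tl d)) / 2 else 1 / 2)"
  using gval_cons_middle[of "d 1" k "digits_tl d"] gval_cons_extreme[OF assms, of "d 1" "digits_tl d"]
  unfolding digits_cons_tl by simp

lemma sum_half_powers: "(\<Sum>n\<in>{1..<Suc N}. (1 / 2 :: real) ^ n) = 1 - (1 / 2) ^ N"
  by (induction N) simp_all

lemma gval_bounds:
  assumes k: "k \<ge> 2"
  shows "0 \<le> gval k d" "gval k d \<le> 1"
proof -
  have "0 \<le> gval k d \<and> gval k d \<le> 1"
  proof (cases "\<exists>N\<ge>1. d N \<notin> {0, k - 1}")
    case True
    define N where "N = (LEAST N. N \<ge> 1 \<and> d N \<notin> {0, k - 1})"
    have "N \<ge> 1"
      unfolding N_def using True by (metis (mono_tags, lifting) LeastI)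
    then obtain M where M: "N = Suc M"
      using not0_implies_Suc by force
    have "d n \<in> {0, k - 1}" if "1 \<le> n" "n < N" for n
      using not_less_Least[of n] that unfolding N_def by blast
    then have "(\<Sum>n\<in>{1..<N}. real (d n) / (real (k - 1) * 2 ^ n)) \<le> (\<Sum>n\<in>{1..<N}. (1 / 2) ^ n)"
      by (intro sum_mono extreme_digit_weight_le k) auto
    also have "\<dots> = 1 - 2 * (1 / 2) ^ N"
      unfolding M sum_half_powers by simp
    finally have "(\<Sum>n\<in>{1..<N}. real (d n) / (real (k - 1) * 2 ^ n)) + (1 / 2) ^ N \<le> 1"
      using zero_le_power[of "1 / 2 :: real" N] by linarith
    moreover have "0 \<le> (\<Sum>n\<in>{1..<N}. real (d n) / (real (k - 1) * 2 ^ n))"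
      by (intro sum_nonneg) simp
    ultimately show ?thesis
      using True unfolding gval_def N_def[symmetric] Let_def by (simp add: power_one_over)
  next
    case False
    then show ?thesis
      using extreme_digit_series(2,3)[OF k, of d] unfolding gval_def if_not_P[OF False] by auto
  qed
  then show "0 \<le> gval k d" "gval k d \<le> 1"
    by simp_all
qed

lemma gval_zero: "gval k (\<lambda>_. 0) = 0"
  unfolding gval_def by simp

lemma gval_top:
  assumes "k \<ge> 2"
  shows "gval k (\<lambda>_. k - 1) = 1"
proof -
  have "(\<lambda>n. real (k - 1) / (real (k - 1) * 2 ^ Suc n)) = (\<lambda>n. (1 / 2) ^ Suc n)"
    using assms by (simp add: power_one_over)
  then show ?thesis
    using power_half_series unfolding gval_def by (simp add: sums_iff)
qed

lemma gval_dist_consecutive_first_digits: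
  assumes k: "k \<ge> 3" and digits: "e 1 = Suc (d 1)" "e 1 < k"
    and d_tl: "\<bar>gval k (digits_tl d) - 1\<bar> \<le> r" and e_tl: "\<bar>gval k (digits_tl e)\<bar> \<le> r"
  shows "\<bar>gval k d - gval k e\<bar> \<le> r / 2"
proof -
  have k2: "k \<ge> 2"
    using k by simp
  note gval_d = gval_first_digit[OF k2, of d] and gval_e = gval_first_digit[OF k2, of e]
  have "0 \<le> r"
    using e_tl by linarith
  consider "d 1 = 0" | "d 1 \<notin> {0, k - 1}" "e 1 = k - 1" | "d 1 \<notin> {0, k - 1}" "e 1 \<notin> {0, k - 1}"
    using digits by force
  then show ?thesis
  proof cases
    case 1
    then have "e 1 \<notin> {0, k - 1}"
      using digits k by auto
    then show ?thesis
      unfolding gval_d gval_e using 1 d_tl by (simp add: diff_divide_distrib[symmetric])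
  next
    case 2
    have "gval k d - gval k e = - (gval k (digits_tl e) / 2)"
      unfolding gval_d gval_e using 2 k by (simp add: of_nat_diff field_simps)
    then show ?thesis
      using e_tl by simp
  qed (simp add: gval_d gval_e \<open>0 \<le> r\<close>)
qed

text \<open>Two expansions of the same point either share their first digit, or they begin with
  \<open>j\<close> and \<open>j + 1\<close> and their tails expand \<open>1\<close> and \<open>0\<close>.\<close>

lemma gval_dist_halves:
  assumes k: "k \<ge> 3"
    and IH: "\<And>x d e. is_expansion k d x \<Longrightarrow> is_expansion k e x \<Longrightarrow> \<bar>gval k d - gval k e\<bar> \<le> (1 / 2) ^ m"
    and d: "is_expansion k d x" and e: "is_expansion k e x" and le: "d 1 \<le> e 1"
  shows "\<bar>gval k d - gval k e\<bar> \<le> (1 / 2) ^ Suc m"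
proof -
  have k2: "k \<ge> 2"
    using k by simp
  obtain y where y: "is_expansion k (digits_tl d) y" and x_d: "x = (real (d 1) + y) / real k"
    using is_expansion_digits_tl[OF k2 d] .
  obtain z where e1: "e 1 < k" and z: "is_expansion k (digits_tl e) z" and x_e: "x = (real (e 1) + z) / real k"
    using is_expansion_digits_tl[OF k2 e] .
  have "0 \<le> y" "y \<le> 1" "0 \<le> z" "z \<le> 1"
    using is_expansion_bounds[OF k2] y z by auto
  moreover have "real (d 1) + y = real (e 1) + z"
    using x_d x_e k by (simp add: divide_cancel_right)
  ultimately consider "d 1 = e 1" "y = z" | "e 1 = Suc (d 1)" "y = 1" "z = 0"
  proof (cases "d 1 = e 1")
    case False
    then have "real (e 1) \<ge> real (d 1) + 1"
      using le by simp
    then show thesis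
      using that(2) \<open>real (d 1) + y = real (e 1) + z\<close> \<open>y \<le> 1\<close> \<open>0 \<le> z\<close> by simp
  qed simp
  then show ?thesis
  proof cases
    case 1
    have "\<bar>gval k (digits_tl d) - gval k (digits_tl e)\<bar> \<le> (1 / 2) ^ m"
      using IH y z \<open>y = z\<close> by blast
    then show ?thesis
      unfolding gval_first_digit[OF k2, of d] gval_first_digit[OF k2, of e] using 1
      by (simp add: diff_divide_distrib[symmetric])
  next
    case 2
    have "\<bar>gval k (digits_tl d) - 1\<bar> \<le> (1 / 2) ^ m"
      using IH[OF y[unfolded \<open>y = 1\<close>] is_expansion_one[OF k2]] gval_top[OF k2] by simp
    moreover have "\<bar>gval k (digits_tl e)\<bar> \<le> (1 / 2) ^ m"
      using IH[OF z[unfolded \<open>z = 0\<close>] is_expansion_zero] gval_zero k by simp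
    ultimately show ?thesis
      using gval_dist_consecutive_first_digits[of k e d, OF k \<open>e 1 = Suc (d 1)\<close> e1] by simp
  qed
qed

lemma gval_dist_le_half_power:
  assumes "k \<ge> 3"
  shows "is_expansion k d x \<Longrightarrow> is_expansion k e x \<Longrightarrow> \<bar>gval k d - gval k e\<bar> \<le> (1 / 2) ^ m"
proof (induction m arbitrary: x d e)
  case 0
  then show ?case
    using gval_bounds[of k d] gval_bounds[of k e] assms by auto
next
  case (Suc m)
  show ?case
  proof (cases "d 1 \<le> e 1")
    case True
    show ?thesis
      by (rule gval_dist_halves[OF assms _ Suc.prems True]) (rule Suc.IH)
  next
    case False
    then have "\<bar>gval k e - gval k d\<bar> \<le> (1 / 2) ^ Suc m"
      by (intro gval_dist_halves[OF assms _ Suc.prems(2,1)]) (simp_all add: Suc.IH)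
    then show ?thesis
      by (simp add: abs_minus_commute)
  qed
qed

lemma nonpos_if_le_half_powers:
  assumes "\<And>m. (x::real) \<le> (1 / 2) ^ m"
  shows "x \<le> 0"
proof (rule ccontr)
  assume "\<not> x \<le> 0"
  then obtain m where "(1 / 2 :: real) ^ m < x"
    using real_arch_pow_inv[of x "1 / 2"] by auto
  with assms[of m] show False
    by simp
qed

lemma gval_expansion_independent:
  assumes "k \<ge> 3" "is_expansion k d x" "is_expansion k e x"
  shows "gval k d = gval k e"
  using nonpos_if_le_half_powers[of "\<bar>gval k d - gval k e\<bar>"] gval_dist_le_half_power[OF assms]
  by simp

lemma g_eq_gval:
  assumes k: "k \<ge> 3" and d: "is_expansion k d x"
  shows "g k x = gval k d"
proof -
  have "is_expansion k (SOME d. is_expansion k d x) x"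
    using d by (rule someI[of "\<lambda>d. is_expansion k d x"])
  then show ?thesis
    unfolding g_def using gval_expansion_independent[OF k _ d] by blast
qed

section \<open>Functional equations and monotonicity of \<open>g\<^sub>k\<close>\<close>

lemma g_bounds:
  assumes "k \<ge> 3" "0 \<le> x" "x \<le> 1"
  shows "0 \<le> g k x" "g k x \<le> 1"
proof -
  obtain d where "is_expansion k d x"
    using expansion_exists[of k x] assms by auto
  then show "0 \<le> g k x" "g k x \<le> 1"
    using g_eq_gval gval_bounds assms by auto
qed

lemma g_zero: "k \<ge> 3 \<Longrightarrow> g k 0 = 0"
  using g_eq_gval[OF _ is_expansion_zero] gval_zero by simp

lemma g_one: "k \<ge> 3 \<Longrightarrow> g k 1 = 1"
  using g_eq_gval[OF _ is_expansion_one] gval_top by simp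

lemma g_digit_cons:
  assumes k: "k \<ge> 3" and y: "0 \<le> y" "y \<le> 1" and j: "j < k"
  shows "g k ((real j + y) / real k) = (if j \<in> {0, k - 1}
    then (real j / real (k - 1) + g k y) / 2 else 1 / 2)"
proof -
  obtain e where e: "is_expansion k e y"
    using expansion_exists[of k y] k y by auto
  then have "is_expansion k (digits_cons j e) ((real j + y) / real k)"
    using is_expansion_digits_cons j k by simp
  then show ?thesis
    using g_eq_gval[OF k] e gval_cons_middle[of j k e] gval_cons_extreme[of k j e] k by auto
qed

lemma g_low:
  assumes k: "k \<ge> 3" and x: "0 \<le> x" "x \<le> 1 / real k"
  shows "g k x = g k (real k * x) / 2"
proof -
  have "real k * x \<le> 1"
    using x k by (simp add: field_simps)
  then show ?thesis
    using g_digit_cons[OF k, of "real k * x" 0] x k by simp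
qed

lemma g_high:
  assumes k: "k \<ge> 3" and x: "(real k - 1) / real k \<le> x" "x \<le> 1"
  shows "g k x = 1 / 2 + g k (real k * x - (real k - 1)) / 2"
proof -
  have "real k - 1 \<le> real k * x" "real k * x \<le> real k"
    using x k by (simp_all add: field_simps)
  moreover have "real (k - 1) = real k - 1"
    using k by (simp add: of_nat_diff)
  ultimately show ?thesis
    using g_digit_cons[OF k, of "real k * x - (real k - 1)" "k - 1"] k by (simp add: add_divide_distrib)
qed

lemma g_middle:
  assumes k: "k \<ge> 3" and x: "1 / real k \<le> x" "x \<le> (real k - 1) / real k"
  shows "g k x = 1 / 2"
proof -
  have lo: "1 \<le> real k * x" and hi: "real k * x \<le> real k - 1"
    using x k by (simp_all add: field_simps)
  obtain j where j: "1 \<le> j" "j \<le> k - 2" "real j \<le> real k * x" "real k * x \<le> real j + 1"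
  proof (cases "real k * x < real k - 1")
    case True
    show thesis
    proof (rule that[of "nat \<lfloor>real k * x\<rfloor>"])
      show "real (nat \<lfloor>real k * x\<rfloor>) \<le> real k * x" "real k * x \<le> real (nat \<lfloor>real k * x\<rfloor>) + 1"
        using lo by linarith+
      show "1 \<le> nat \<lfloor>real k * x\<rfloor>" "nat \<lfloor>real k * x\<rfloor> \<le> k - 2"
        using lo True k by linarith+
    qed
  next
    case False
    then show thesis
      using that[of "k - 2"] hi k by (simp add: of_nat_diff)
  qed
  then have "g k ((real j + (real k * x - real j)) / real k) = 1 / 2"
    using g_digit_cons[OF k, of "real k * x - real j" j] k by auto
  then show ?thesis
    using k by simp
qed

lemma g_le_half:
  assumes k: "k \<ge> 3" and x: "0 \<le> x" "x \<le> (real k - 1) / real k"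
  shows "g k x \<le> 1 / 2"
proof (cases "x \<le> 1 / real k")
  case True
  then have "real k * x \<le> 1"
    using k by (simp add: field_simps)
  then show ?thesis
    using g_low[OF k x(1) True] g_bounds[OF k, of "real k * x"] x k by simp
next
  case False
  then show ?thesis
    using g_middle[OF k _ x(2)] by simp
qed

lemma g_ge_half:
  assumes k: "k \<ge> 3" and x: "1 / real k \<le> x" "x \<le> 1"
  shows "1 / 2 \<le> g k x"
proof (cases "(real k - 1) / real k \<le> x")
  case True
  then have "0 \<le> real k * x - (real k - 1)" "real k * x - (real k - 1) \<le> 1"
    using x k by (simp_all add: field_simps)
  then show ?thesis
    using g_high[OF k True x(2)] g_bounds[OF k] by simp
next
  case False
  then show ?thesis
    using g_middle[OF k x(1)] by simp
qed

lemma g_mono_le_half_power: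
  assumes k: "k \<ge> 3"
  shows "0 \<le> x \<Longrightarrow> x \<le> y \<Longrightarrow> y \<le> 1 \<Longrightarrow> g k x - g k y \<le> (1 / 2) ^ m"
proof (induction m arbitrary: x y)
  case 0
  then show ?case
    using g_bounds[OF k, of x] g_bounds[OF k, of y] by simp
next
  case (Suc m)
  consider "y \<le> 1 / real k" | "(real k - 1) / real k \<le> x" | "x \<le> (real k - 1) / real k" "1 / real k \<le> y"
    by linarith
  then show ?case
  proof cases
    case 1
    then have "g k (real k * x) - g k (real k * y) \<le> (1 / 2) ^ m"
      using Suc k by (intro Suc.IH) (simp_all add: field_simps)
    then show ?thesis
      using g_low[OF k] Suc.prems 1 by simp
  next
    case 2
    then have "g k (real k * x - (real k - 1)) - g k (real k * y - (real k - 1)) \<le> (1 / 2) ^ m"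
      using Suc k by (intro Suc.IH) (simp_all add: field_simps)
    then show ?thesis
      using g_high[OF k] Suc.prems 2 by simp
  next
    case 3
    have "0 \<le> (1 / 2 :: real) ^ Suc m"
      by simp
    then show ?thesis
      using g_le_half[OF k, of x] g_ge_half[OF k, of y] Suc.prems 3 by linarith
  qed
qed

lemma g_mono:
  assumes "k \<ge> 3" "0 \<le> x" "x \<le> y" "y \<le> 1"
  shows "g k x \<le> g k y"
  using nonpos_if_le_half_powers[of "g k x - g k y"] g_mono_le_half_power[OF assms] by simp

lemma g_le_one_minus_half_power:
  assumes k: "k \<ge> 3"
  shows "0 \<le> y \<Longrightarrow> y \<le> 1 - (1 / real k) ^ m \<Longrightarrow> g k y \<le> 1 - (1 / 2) ^ Suc m"
proof (induction m arbitrary: y)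
  case 0
  then show ?case
    using g_zero[OF k] by simp
next
  case (Suc m)
  show ?case
  proof (cases "y \<le> (real k - 1) / real k")
    case True
    have "(1 / 2 :: real) ^ Suc (Suc m) \<le> 1 / 2"
      using power_le_one[of "1 / 2 :: real" "Suc m"] by simp
    then show ?thesis
      using g_le_half[OF k Suc.prems(1) True] by simp
  next
    case False
    have "0 \<le> (1 / real k) ^ Suc m"
      by simp
    then have "y \<le> 1"
      using Suc.prems(2) by linarith
    have "real k * y - (real k - 1) \<le> real k * (1 - (1 / real k) ^ Suc m) - (real k - 1)"
      using Suc.prems(2) k by simp
    also have "\<dots> = 1 - (1 / real k) ^ m"
      using k by (simp add: field_simps)
    finally have "g k (real k * y - (real k - 1)) \<le> 1 - (1 / 2) ^ Suc m"
      using False k by (intro Suc.IH) (simp_all add: field_simps)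
    then show ?thesis
      using g_high[OF k _ \<open>y \<le> 1\<close>] False by simp
  qed
qed

lemma g_less_one:
  assumes k: "k \<ge> 3" and y: "0 \<le> y" "y < 1"
  shows "g k y < 1"
proof -
  obtain m where "(1 / real k) ^ m < 1 - y"
    using real_arch_pow_inv[of "1 - y" "1 / real k"] y k by auto
  then have "g k y \<le> 1 - (1 / 2) ^ Suc m"
    using g_le_one_minus_half_power[OF k y(1)] by simp
  moreover have "0 < (1 / 2 :: real) ^ Suc m"
    by simp
  ultimately show ?thesis
    by linarith
qed

lemma g_ge_half_power:
  assumes k: "k \<ge> 3"
  shows "y \<le> 1 \<Longrightarrow> (1 / real k) ^ m \<le> y \<Longrightarrow> (1 / 2) ^ Suc m \<le> g k y"
proof (induction m arbitrary: y)
  case 0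
  then show ?case
    using g_one[OF k] by simp
next
  case (Suc m)
  show ?case
  proof (cases "1 / real k \<le> y")
    case True
    have "(1 / 2 :: real) ^ Suc (Suc m) \<le> 1 / 2"
      using power_le_one[of "1 / 2 :: real" "Suc m"] by simp
    then show ?thesis
      using g_ge_half[OF k True Suc.prems(1)] by simp
  next
    case False
    have "0 \<le> (1 / real k) ^ Suc m"
      by simp
    then have "0 \<le> y"
      using Suc.prems(2) by linarith
    have "(1 / real k) ^ m = real k * (1 / real k) ^ Suc m"
      using k by simp
    also have "\<dots> \<le> real k * y"
      using Suc.prems(2) by (intro mult_left_mono) auto
    finally have "(1 / 2) ^ Suc m \<le> g k (real k * y)"
      using False k by (intro Suc.IH) (simp_all add: field_simps)
    then show ?thesis
      using g_low[OF k \<open>0 \<le> y\<close>] False by simp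
  qed
qed

lemma g_pos:
  assumes k: "k \<ge> 3" and y: "0 < y" "y \<le> 1"
  shows "0 < g k y"
proof -
  obtain m where "(1 / real k) ^ m < y"
    using real_arch_pow_inv[of y "1 / real k"] y k by auto
  then have "(1 / 2) ^ Suc m \<le> g k y"
    using g_ge_half_power[OF k y(2)] by simp
  moreover have "0 < (1 / 2 :: real) ^ Suc m"
    by simp
  ultimately show ?thesis
    by linarith
qed

lemma g_less_half:
  assumes k: "k \<ge> 3" and a: "0 \<le> a" "a < 1 / real k"
  shows "g k a < 1 / 2"
proof -
  have "real k * a < 1"
    using a k by (simp add: field_simps)
  then show ?thesis
    using g_low[OF k a(1)] g_less_one[OF k] a k by simp
qed

lemma g_greater_half:
  assumes k: "k \<ge> 3" and b: "(real k - 1) / real k < b" "b \<le> 1"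
  shows "1 / 2 < g k b"
proof -
  have "0 < real k * b - (real k - 1)" "real k * b - (real k - 1) \<le> 1"
    using b k by (simp_all add: field_simps)
  then show ?thesis
    using g_high[OF k _ b(2)] g_pos[OF k] b by simp
qed

section \<open>\<open>g\<^sub>k\<close> conjugates \<open>T\<^sub>k\<close> to \<open>T\<^sub>2\<close> on the outer intervals\<close>

definition in_outer_intervals :: "nat \<Rightarrow> real \<Rightarrow> bool" where
  "in_outer_intervals k y \<longleftrightarrow> (0 \<le> y \<and> y < 1 / real k) \<or> ((real k - 1) / real k < y \<and> y < 1)"

lemma in_outer_intervals_bounds:
  assumes "k \<ge> 2" "in_outer_intervals k y"
  shows "0 \<le> y" "y < 1"
proof -
  have "1 / real k < 1" "0 \<le> (real k - 1) / real k"
    using assms(1) by auto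
  then show "0 \<le> y" "y < 1"
    using assms(2) unfolding in_outer_intervals_def by auto
qed

lemma in_outer_intervals_if_g_ne_half:
  assumes "k \<ge> 3" "0 \<le> y" "y < 1" "g k y \<noteq> 1 / 2"
  shows "in_outer_intervals k y"
  using g_middle[of k y] assms unfolding in_outer_intervals_def by force

lemma T_pos:
  assumes "k \<ge> 1" "in_outer_intervals k y" "0 < y"
  shows "0 < T k y"
  using assms(2) unfolding in_outer_intervals_def
proof (elim disjE conjE)
  assume "y < 1 / real k"
  then show ?thesis
    using T_low[of y k] assms by simp
next
  assume hi: "(real k - 1) / real k < y" "y < 1"
  then have "real k - 1 < real k * y"
    using assms(1) by (simp add: field_simps)
  then show ?thesis
    using T_high[OF assms(1) hi] by simp
qed

lemma g_T_commute:
  assumes k: "k \<ge> 3" and y: "in_outer_intervals k y"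
  shows "g k (T k y) = T 2 (g k y)"
  using y unfolding in_outer_intervals_def
proof (elim disjE conjE)
  assume lo: "0 \<le> y" "y < 1 / real k"
  define z where "z = real k * y"
  have z: "0 \<le> z" "z < 1"
    unfolding z_def using lo k by (simp_all add: field_simps)
  have gy: "g k y = g k z / 2"
    unfolding z_def using g_low[OF k lo(1)] lo by simp
  have "0 \<le> g k z" "g k z < 1"
    using g_bounds[OF k] g_less_one[OF k] z by auto
  then have "T 2 (g k y) = g k z"
    unfolding gy using T_eq[of 0 2 "g k z / 2"] by simp
  then show ?thesis
    unfolding z_def using T_low[OF lo] by simp
next
  assume hi: "(real k - 1) / real k < y" "y < 1"
  define z where "z = real k * y - (real k - 1)"
  have z: "0 \<le> z" "z < 1"
    unfolding z_def using hi k by (simp_all add: field_simps)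
  have gy: "g k y = 1 / 2 + g k z / 2"
    unfolding z_def using g_high[OF k] hi by simp
  have "0 \<le> g k z" "g k z < 1"
    using g_bounds[OF k] g_less_one[OF k] z by auto
  then have "T 2 (g k y) = g k z"
    unfolding gy using T_eq[of 1 2 "1 / 2 + g k z / 2"] by simp
  then show ?thesis
    unfolding z_def using T_high[OF _ hi] k by simp
qed

lemma g_funpow_T_commute:
  assumes "k \<ge> 3" "\<And>m. in_outer_intervals k ((T k ^^ m) y)"
  shows "g k ((T k ^^ n) y) = (T 2 ^^ n) (g k y)"
  using g_T_commute[OF assms(1) assms(2)] by (induction n) simp_all

text \<open>Since \<open>g\<^sub>k y \<noteq> 1/2\<close>, the value \<open>g\<^sub>k x = g\<^sub>k y\<close> forces \<open>x\<close> into the closure of the outer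
  interval containing \<open>y\<close>, where the same branch of \<open>T\<^sub>k\<close> applies to both points.\<close>

lemma g_eq_stretch:
  assumes k: "k \<ge> 3" and y: "in_outer_intervals k y" "g k y \<noteq> 1 / 2"
    and x: "0 \<le> x" "x \<le> 1" "g k x = g k y"
  obtains x' where "0 \<le> x'" "x' \<le> 1" "g k x' = g k (T k y)" "\<bar>T k y - x'\<bar> = real k * \<bar>y - x\<bar>"
proof -
  have k_mid: "1 / real k \<le> (real k - 1) / real k"
    using k by (simp add: divide_right_mono)
  consider "0 \<le> y" "y < 1 / real k" | "(real k - 1) / real k < y" "y < 1"
    using y(1) unfolding in_outer_intervals_def by auto
  then show ?thesis
  proof cases
    case 1
    then have "g k y \<le> 1 / 2"
      using g_le_half[OF k] k_mid by simp
    then have x_lo: "x \<le> 1 / real k"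
      using g_ge_half[OF k _ x(2)] x(3) y(2) by force
    show ?thesis
    proof (rule that[of "real k * x"])
      show "0 \<le> real k * x" "real k * x \<le> 1"
        using x(1) x_lo k by (simp_all add: field_simps)
      show "g k (real k * x) = g k (T k y)"
        using g_low[OF k x(1) x_lo] g_low[OF k] T_low[OF 1] 1 x(3) by simp
      show "\<bar>T k y - real k * x\<bar> = real k * \<bar>y - x\<bar>"
        unfolding T_low[OF 1] by (simp flip: right_diff_distrib add: abs_mult)
    qed
  next
    case 2
    then have "1 / 2 \<le> g k y"
      using g_ge_half[OF k] k_mid by simp
    then have x_hi: "(real k - 1) / real k \<le> x"
      using g_le_half[OF k x(1)] x(3) y(2) by force
    show ?thesis
    proof (rule that[of "real k * x - (real k - 1)"])
      show "0 \<le> real k * x - (real k - 1)" "real k * x - (real k - 1) \<le> 1"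
        using x(2) x_hi k by (simp_all add: field_simps)
      show "g k (real k * x - (real k - 1)) = g k (T k y)"
        using g_high[OF k x_hi x(2)] g_high[OF k] T_high[OF _ 2] 2 x(3) k by simp
      show "\<bar>T k y - (real k * x - (real k - 1))\<bar> = real k * \<bar>y - x\<bar>"
        using T_high[OF _ 2] k by (simp flip: right_diff_distrib add: abs_mult)
    qed
  qed
qed

lemma g_ne_if_orbit_in_outer_intervals:
  assumes k: "k \<ge> 3"
    and orbit: "\<And>m. in_outer_intervals k ((T k ^^ m) y) \<and> g k ((T k ^^ m) y) \<noteq> 1 / 2"
    and x: "0 \<le> x" "x \<le> 1" "x \<noteq> y"
  shows "g k x \<noteq> g k y"
proof
  assume eq: "g k x = g k y"
  have stretched: "\<exists>x'. 0 \<le> x' \<and> x' \<le> 1 \<and> g k x' = g k ((T k ^^ m) y)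
      \<and> \<bar>(T k ^^ m) y - x'\<bar> = real k ^ m * \<bar>y - x\<bar>" for m
  proof (induction m)
    case 0
    show ?case
      using x eq by (auto simp: abs_minus_commute)
  next
    case (Suc m)
    then obtain x' where x': "0 \<le> x'" "x' \<le> 1" "g k x' = g k ((T k ^^ m) y)"
        and dist: "\<bar>(T k ^^ m) y - x'\<bar> = real k ^ m * \<bar>y - x\<bar>"
      by blast
    obtain x'' where "0 \<le> x''" "x'' \<le> 1" "g k x'' = g k ((T k ^^ Suc m) y)"
        "\<bar>(T k ^^ Suc m) y - x''\<bar> = real k * \<bar>(T k ^^ m) y - x'\<bar>"
      using g_eq_stretch[OF k orbit[of m, THEN conjunct1] orbit[of m, THEN conjunct2] x'] by auto
    then show ?case
      unfolding dist by (intro exI[of _ x'']) simp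
  qed
  obtain m where "1 / \<bar>y - x\<bar> < real k ^ m"
    using real_arch_pow[of "real k"] k by auto
  then have "1 < real k ^ m * \<bar>y - x\<bar>"
    using x(3) by (simp add: field_simps)
  moreover obtain x' where "0 \<le> x'" "x' \<le> 1" "\<bar>(T k ^^ m) y - x'\<bar> = real k ^ m * \<bar>y - x\<bar>"
    using stretched[of m] by blast
  moreover have "0 \<le> (T k ^^ m) y" "(T k ^^ m) y < 1"
    using in_outer_intervals_bounds[of k] orbit k by auto
  ultimately show False
    by (simp add: abs_if split: if_splits)
qed

section \<open>The survivor sets\<close>

lemma nat_floor_in_outer_intervals:
  assumes "k \<ge> 1" "in_outer_intervals k y"
  shows "nat \<lfloor>real k * y\<rfloor> \<in> {0, k - 1}"
  using assms(2) unfolding in_outer_intervals_def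
proof (elim disjE conjE)
  assume "0 \<le> y" "y < 1 / real k"
  then have "\<lfloor>real k * y\<rfloor> = 0"
    using assms(1) by (intro floor_unique) (simp_all add: field_simps)
  then show ?thesis
    by simp
next
  assume "(real k - 1) / real k < y" "y < 1"
  then have "\<lfloor>real k * y\<rfloor> = int (k - 1)"
    using assms(1) by (intro floor_unique) (simp_all add: field_simps of_nat_diff)
  then show ?thesis
    by simp
qed

lemma C_if_orbit_in_outer_intervals:
  assumes k: "k \<ge> 2" and orbit: "\<And>n. in_outer_intervals k ((T k ^^ n) x)"
  shows "x \<in> C k"
proof -
  have x: "0 \<le> x" "x < 1"
    using in_outer_intervals_bounds[OF k orbit[of 0]] by simp_all
  have "orbit_digits k x n \<in> {0, k - 1}" for n
    unfolding orbit_digits_def using nat_floor_in_outer_intervals k orbit by simp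
  then show ?thesis
    using is_expansion_orbit_digits[OF k x] x unfolding C_def is_expansion_def by auto
qed

lemma W_orbit_in_outer_intervals:
  assumes k: "k \<ge> 2" and a: "a < 1 / real k" and b: "(real k - 1) / real k < b"
    and x: "x \<in> W k a b"
  shows "in_outer_intervals k ((T k ^^ n) x)"
proof -
  have "0 \<le> (T k ^^ n) x" "(T k ^^ n) x < 1" "(T k ^^ n) x \<notin> {a<..<b}"
    using x funpow_T_bounds unfolding W_def by auto
  then show ?thesis
    using a b unfolding in_outer_intervals_def by auto
qed

lemma g_notin_greaterThanLessThan:
  assumes k: "k \<ge> 3" and y: "0 \<le> y" "y \<le> 1" "y \<notin> {a<..<b}" and "a \<le> 1" "0 \<le> b"
  shows "g k y \<notin> {g k a<..<g k b}"
proof (cases "y \<le> a")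
  case True
  then show ?thesis
    using g_mono[OF k y(1) True \<open>a \<le> 1\<close>] by simp
next
  case False
  then have "b \<le> y"
    using y(3) by auto
  then show ?thesis
    using g_mono[OF k \<open>0 \<le> b\<close> _ y(2)] by simp
qed

lemma W_subset_g_preimage:
  assumes k: "k \<ge> 3" and a: "0 \<le> a" "a < 1 / real k" and b: "(real k - 1) / real k < b" "b \<le> 1"
  shows "W k a b \<subseteq> g_preimage k (W 2 (g k a) (g k b))"
proof
  fix x
  assume x: "x \<in> W k a b"
  then have x_bounds: "0 \<le> x" "x < 1"
    unfolding W_def by auto
  have "1 / real k \<le> 1" "0 \<le> (real k - 1) / real k"
    using k by simp_all
  then have "a \<le> 1" "0 \<le> b"
    using a(2) b(1) by linarith+
  have "(T 2 ^^ n) (g k x) \<notin> {g k a<..<g k b}" for n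
  proof -
    have "g k ((T k ^^ n) x) = (T 2 ^^ n) (g k x)"
      using g_funpow_T_commute[OF k W_orbit_in_outer_intervals[OF _ a(2) b(1) x]] k by simp
    moreover have "g k ((T k ^^ n) x) \<notin> {g k a<..<g k b}"
      using x funpow_T_bounds[OF x_bounds, where m = k] \<open>a \<le> 1\<close> \<open>0 \<le> b\<close> unfolding W_def
      by (intro g_notin_greaterThanLessThan k) (auto simp: less_imp_le)
    ultimately show ?thesis
      by simp
  qed
  moreover have "0 \<le> g k x" "g k x < 1"
    using g_bounds[OF k] g_less_one[OF k] x_bounds by auto
  ultimately show "x \<in> g_preimage k (W 2 (g k a) (g k b))"
    using x_bounds unfolding W_def g_preimage_def by auto
qed

lemma g_preimage_orbit:
  assumes k: "k \<ge> 3" and c: "c < 1 / 2" and e: "1 / 2 < e" and x: "x \<in> g_preimage k (W 2 c e)"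
  shows "in_outer_intervals k ((T k ^^ n) x)" "g k ((T k ^^ n) x) \<notin> {c<..<e}"
proof -
  have x_bounds: "0 \<le> x" "x \<le> 1" and gx: "g k x \<in> W 2 c e"
    using x unfolding g_preimage_def by auto
  have avoid: "(T 2 ^^ n) (g k x) \<notin> {c<..<e}" for n
    using gx unfolding W_def by blast
  have u: "0 \<le> (T 2 ^^ n) (g k x)" "(T 2 ^^ n) (g k x) < 1" "(T 2 ^^ n) (g k x) \<noteq> 1 / 2" for n
  proof -
    show "0 \<le> (T 2 ^^ n) (g k x)" "(T 2 ^^ n) (g k x) < 1"
      using gx funpow_T_bounds[of "g k x"] unfolding W_def by auto
    show "(T 2 ^^ n) (g k x) \<noteq> 1 / 2"
      using avoid[of n] c e by auto
  qed
  have "x \<noteq> 1"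
    using u(2)[of 0] g_one[OF k] by auto
  have orbit: "in_outer_intervals k ((T k ^^ m) x) \<and> g k ((T k ^^ m) x) = (T 2 ^^ m) (g k x)" for m
  proof (induction m)
    case 0
    show ?case
      using in_outer_intervals_if_g_ne_half[OF k x_bounds(1)] u[of 0] x_bounds \<open>x \<noteq> 1\<close> by simp
  next
    case (Suc n)
    then have "g k ((T k ^^ Suc n) x) = (T 2 ^^ Suc n) (g k x)"
      using g_T_commute[OF k] by simp
    moreover have "0 \<le> (T k ^^ Suc n) x" "(T k ^^ Suc n) x < 1"
      using T_bounds by simp_all
    ultimately show ?case
      using in_outer_intervals_if_g_ne_half[OF k] u[of "Suc n"] by simp
  qed
  then show "in_outer_intervals k ((T k ^^ n) x)"
    by blast
  show "g k ((T k ^^ n) x) \<notin> {c<..<e}"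
    using orbit[of n] avoid[of n] by simp
qed

lemma g_preimage_subset_W:
  assumes k: "k \<ge> 3" and a: "0 \<le> a" "a < 1 / real k" and b: "(real k - 1) / real k < b" "b \<le> 1"
  shows "g_preimage k (W 2 (g k a) (g k b)) \<subseteq> W k a b"
proof
  fix x
  assume x: "x \<in> g_preimage k (W 2 (g k a) (g k b))"
  have ga: "g k a < 1 / 2" and gb: "1 / 2 < g k b"
    using g_less_half[OF k a] g_greater_half[OF k b] .
  note orbit = g_preimage_orbit[OF k ga gb x]
  have "(T k ^^ n) x \<notin> {a<..<b}" for n
  proof
    define y where "y = (T k ^^ n) x"
    assume "(T k ^^ n) x \<in> {a<..<b}"
    then have "a < y" "y < b"
      unfolding y_def by simp_all
    have y_orbit: "in_outer_intervals k ((T k ^^ m) y) \<and> g k ((T k ^^ m) y) \<noteq> 1 / 2" for m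
      using orbit[of "m + n"] ga gb unfolding y_def funpow_add comp_def by auto
    have "0 \<le> y" "y < 1"
      using in_outer_intervals_bounds[of k y] y_orbit[of 0] k by simp_all
    have "g k a \<le> g k y"
      using g_mono[OF k a(1)] \<open>a < y\<close> \<open>y < 1\<close> by simp
    moreover have "g k a \<noteq> g k y"
      using g_ne_if_orbit_in_outer_intervals[OF k y_orbit a(1)] \<open>a < y\<close> \<open>y < 1\<close> by simp
    moreover have "g k y \<le> g k b"
      using g_mono[OF k \<open>0 \<le> y\<close>] \<open>y < b\<close> b(2) by simp
    moreover have "g k b \<noteq> g k y"
      using g_ne_if_orbit_in_outer_intervals[OF k y_orbit _ b(2)] \<open>0 \<le> y\<close> \<open>y < b\<close> by simp
    ultimately show False
      using orbit(2)[of n] unfolding y_def by simp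
  qed
  moreover have "0 \<le> x" "x < 1"
    using in_outer_intervals_bounds[OF _ orbit(1)[of 0]] k by simp_all
  ultimately show "x \<in> W k a b"
    unfolding W_def by simp
qed

lemma g_preimage_disjoint_B:
  assumes k: "k \<ge> 3" and c: "c < 1 / 2" and e: "1 / 2 < e"
  shows "g_preimage k (W 2 c e) \<inter> B k = {}"
proof (intro equalityI subsetI, elim IntE)
  fix x
  assume x: "x \<in> g_preimage k (W 2 c e)" and "x \<in> B k"
  then obtain l n where x_eq: "x = real l / real k ^ n" and "1 \<le> l" "1 \<le> n"
    unfolding B_def by auto
  have pos: "0 < (T k ^^ m) x" for m
  proof (induction m)
    case 0
    show ?case
      using x_eq \<open>1 \<le> l\<close> k by simp
  next
    case (Suc m)
    then show ?case
      using T_pos[OF _ g_preimage_orbit(1)[OF k c e x]] k by simp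
  qed
  then show "x \<in> {}"
    using pos[of n] funpow_T_k_adic[of k n l] x_eq \<open>1 \<le> n\<close> k by simp
qed simp

theorem mainTheorem7:
  fixes k :: nat and a b :: real
  assumes "k \<ge> 3" and "0 \<le> a" and "a < 1 / real k"
    and "(real k - 1) / real k < b" and "b \<le> 1"
  shows "W k a b \<subseteq> C k
    \<and> g_preimage k (W 2 (g k a) (g k b)) \<inter> B k = {}
    \<and> W k a b = C k \<inter> g_preimage k (W 2 (g k a) (g k b))"
proof (intro conjI)
  have k: "k \<ge> 2"
    using assms(1) by simp
  show W_C: "W k a b \<subseteq> C k"
    using C_if_orbit_in_outer_intervals[OF k] W_orbit_in_outer_intervals[OF k assms(3,4)] by blast
  show "g_preimage k (W 2 (g k a) (g k b)) \<inter> B k = {}"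
    using g_preimage_disjoint_B[OF assms(1)] g_less_half[OF assms(1-3)] g_greater_half[OF assms(1,4,5)] .
  show "W k a b = C k \<inter> g_preimage k (W 2 (g k a) (g k b))"
    using W_C W_subset_g_preimage[OF assms] g_preimage_subset_W[OF assms] by blast
qed

end
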